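(* Let $H$ be a bounded strongly planar embedding of a marked poset $(P,A,\lambda)$, and let $F$ be a bounded face of $H$ not containing either of the two additional edges joining $\hat0$ and $\hat1$. Suppose the left boundary of $F$ is the chain $p_1>p_2>\cdots>p_k$ and the right boundary is $p_1=q_1>q_2>\cdots>q_\ell=p_k$. Let $L_1,\dots,L_{\mathcal N}$, $\mathcal N=\binom{k+\ell-4}{\ell-2}$, be the total orders on $\{p_1,\dots,p_k,q_2,\dots,q_{\ell-1}\}$ extending both chains, and let $\widehat P_j$ be the poset on $\widehat P$ whose order is generated by the order of $\widehat P$ together with $L_j$. Then $\bigcup_{j=1}^{\mathcal N}\mathcal{O}(\widehat P_j,\widehat A)_\lambda=\mathcal{O}(\widehat P,\widehat A)_\lambda$, and for $i\ne j$ the intersection $\mathcal{O}(\widehat P_i,\widehat A)_\lambda\cap\mathcal{O}(\widehat P_j,\widehat A)_\lambda$ is a common face of both polytopes (possibly empty); i.e. these polytopes form a subdivision of $\mathcal{O}(\widehat P,\widehat A)_\lambda$.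
   Context: A marked poset $(P,A,\lambda)$ consists of a finite poset $P$, a subposet $A\subseteq P$ containing all minimal and all maximal elements of $P$, and an order-preserving map $\lambda:A\to\mathbb{R}$. For a poset $Q$, $B\subseteq Q$ and $\mu:B\to\mathbb{R}$, $\mathcal{O}(Q,B)_\mu=\{x\in\mathbb{R}^Q:x_p\le x_q\text{ for }p<q\text{ in }Q,\ x_b=\mu(b)\text{ for }b\in B\}$. Let $\widehat P=P\sqcup\{\hat0,\hat1\}$ with $\hat0<p<\hat1$ for all $p\in P$, $\widehat A=A\cup\{\hat0,\hat1\}$, and extend $\lambda$ by $\lambda(\hat0)=\min_{a\in A}\lambda(a)$, $\lambda(\hat1)=\max_{a\in A}\lambda(a)$ (so $\mathcal{O}(\widehat P,\widehat A)_\lambda$ is $\mathcal{O}(P,A)_\lambda$ with two fixed coordinates appended); elements of $\widehat A$ are called marked. $P$ is strongly planar if the Hasse diagram of $\widehat P$ has a planar drawing in which $y$-coordinates strictly increase along every covering relation. A bounded embedding $H$ is such a drawing together with two additional edges joining $\hat0$ and $\hat1$, one drawn to the left of everything else and one to the right, regarded as a plane graph. For a bounded face $F$ of $H$, $\min F$ and $\max F$ are the least and greatest elements of $\widehat P$ on its boundary; removing them splits the boundary into two paths, and the left (resp. right) boundary of $F$ is the left (resp. right) path together with $\min F$ and $\max F$ (each is a saturated chain). $H$ is a bounded strongly planar embedding of $(P,A,\lambda)$ if for every bounded face $F$ whose left boundary contains an element of $\widehat A$, both $\min F$ and $\max F$ lie in $\widehat A$. *)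

theory Defs
  imports "HOL-Analysis.Analysis"
begin

text \<open>A finite poset P is modelled as a finite type with a partial order.
  P-hat = P plus a new bottom and a new top element.\<close>

datatype 'a ext = Bot | El 'a | Top

lemma UNIV_ext: "(UNIV :: 'a ext set) = {Bot, Top} \<union> range El"
  by (auto intro: ext.exhaust)

instance ext :: (finite) finite
  by standard (simp add: UNIV_ext)

fun hle :: "'a::order ext \<Rightarrow> 'a ext \<Rightarrow> bool" where
  "hle Bot _ = True"
| "hle (El a) Bot = False"
| "hle (El a) (El b) = (a \<le> b)"
| "hle (El a) Top = True"
| "hle Top b = (b = Top)"

definition hlt :: "'a::order ext \<Rightarrow> 'a ext \<Rightarrow> bool" where
  "hlt a b \<longleftrightarrow> hle a b \<and> a \<noteq> b"

definition hrel :: "('a::order ext \<times> 'a ext) set" where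
  "hrel = {(a, b). hlt a b}"

definition marked_poset :: "'a::{finite,order} set \<Rightarrow> ('a \<Rightarrow> real) \<Rightarrow> bool" where
  "marked_poset A lam \<longleftrightarrow>
     (\<forall>p. (\<forall>q. \<not> q < p) \<longrightarrow> p \<in> A) \<and>
     (\<forall>p. (\<forall>q. \<not> p < q) \<longrightarrow> p \<in> A) \<and>
     (\<forall>a\<in>A. \<forall>b\<in>A. a \<le> b \<longrightarrow> lam a \<le> lam b)"

definition Ahat :: "'a set \<Rightarrow> 'a ext set" where
  "Ahat A = {Bot, Top} \<union> El ` A"

fun lamhat :: "'a set \<Rightarrow> ('a \<Rightarrow> real) \<Rightarrow> 'a ext \<Rightarrow> real" where
  "lamhat A lam Bot = Min (lam ` A)"
| "lamhat A lam (El a) = lam a"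
| "lamhat A lam Top = Max (lam ` A)"

text \<open>Marked order polytope O(Q,B)_mu in R^Q, where the order of Q is
  given by the (strict) relation R on the finite index type.\<close>

definition order_poly ::
  "('b::finite \<times> 'b) set \<Rightarrow> 'b set \<Rightarrow> ('b \<Rightarrow> real) \<Rightarrow> (real ^ 'b) set" where
  "order_poly R B mu = {x. (\<forall>(p, q)\<in>R. x $ p \<le> x $ q) \<and> (\<forall>b\<in>B. x $ b = mu b)}"

definition covers :: "'a::order ext \<Rightarrow> 'a ext \<Rightarrow> bool" where
  "covers a b \<longleftrightarrow> hlt a b \<and> \<not> (\<exists>c. hlt a c \<and> hlt c b)"

definition up_arc :: "(real \<Rightarrow> complex) \<Rightarrow> complex \<Rightarrow> complex \<Rightarrow> bool" where
  "up_arc g z w \<longleftrightarrow> arc g \<and> pathstart g = z \<and> pathfinish g = w \<and>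
     (\<forall>s\<in>{0..1}. \<forall>t\<in>{0..1}. s < t \<longrightarrow> Im (g s) < Im (g t))"

datatype 'a edge_id = Cov "'a ext" "'a ext" | LeftE | RightE

definition edge_ids :: "'a::order edge_id set" where
  "edge_ids = {Cov a b | a b. covers a b} \<union> {LeftE, RightE}"

fun ends :: "'a edge_id \<Rightarrow> 'a ext set" where
  "ends (Cov a b) = {a, b}"
| "ends LeftE = {Bot, Top}"
| "ends RightE = {Bot, Top}"

fun path_of ::
  "('a ext \<Rightarrow> 'a ext \<Rightarrow> real \<Rightarrow> complex) \<Rightarrow> (real \<Rightarrow> complex) \<Rightarrow> (real \<Rightarrow> complex)
    \<Rightarrow> 'a edge_id \<Rightarrow> real \<Rightarrow> complex" where
  "path_of edge eL eR (Cov a b) = edge a b"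
| "path_of edge eL eR LeftE = eL"
| "path_of edge eL eR RightE = eR"

definition drawing where
  "drawing pos edge eL eR =
     range pos \<union> (\<Union>e\<in>edge_ids. path_image (path_of edge eL eR e))"

text \<open>A bounded embedding: vertices at distinct points of the plane (complex
  numbers, y = Im), every covering relation drawn as an upward arc, the two
  additional edges joining Bot and Top drawn as upward arcs, edges meet only
  at common endpoints and pass through no other vertex, and the additional
  edge eL (eR) lies to the left (right) of everything else.\<close>
definition bounded_embedding ::
  "('a::order ext \<Rightarrow> complex) \<Rightarrow> ('a ext \<Rightarrow> 'a ext \<Rightarrow> real \<Rightarrow> complex)
     \<Rightarrow> (real \<Rightarrow> complex) \<Rightarrow> (real \<Rightarrow> complex) \<Rightarrow> bool" where
  "bounded_embedding pos edge eL eR \<longleftrightarrow>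
     inj pos \<and>
     (\<forall>a b. covers a b \<longrightarrow> up_arc (edge a b) (pos a) (pos b)) \<and>
     up_arc eL (pos Bot) (pos Top) \<and> up_arc eR (pos Bot) (pos Top) \<and>
     (\<forall>e\<in>edge_ids. \<forall>e'\<in>edge_ids. e \<noteq> e' \<longrightarrow>
        path_image (path_of edge eL eR e) \<inter> path_image (path_of edge eL eR e')
          \<subseteq> pos ` (ends e \<inter> ends e')) \<and>
     (\<forall>e\<in>edge_ids. \<forall>v. pos v \<in> path_image (path_of edge eL eR e) \<longrightarrow> v \<in> ends e) \<and>
     (\<forall>z\<in>drawing pos edge eL eR. z \<notin> path_image eL \<longrightarrow>
        (\<forall>w\<in>path_image eL. Im w = Im z \<longrightarrow> Re w < Re z)) \<and>
     (\<forall>z\<in>drawing pos edge eL eR. z \<notin> path_image eR \<longrightarrow>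
        (\<forall>w\<in>path_image eR. Im w = Im z \<longrightarrow> Re z < Re w))"

definition bounded_faces where
  "bounded_faces pos edge eL eR =
     {F \<in> components (- drawing pos edge eL eR). bounded F}"

definition bdry_elems :: "('a ext \<Rightarrow> complex) \<Rightarrow> complex set \<Rightarrow> 'a ext set" where
  "bdry_elems pos F = {v. pos v \<in> frontier F}"

definition face_min :: "('a::order ext \<Rightarrow> complex) \<Rightarrow> complex set \<Rightarrow> 'a ext" where
  "face_min pos F = (THE v. v \<in> bdry_elems pos F \<and> (\<forall>w\<in>bdry_elems pos F. hle v w))"

definition face_max :: "('a::order ext \<Rightarrow> complex) \<Rightarrow> complex set \<Rightarrow> 'a ext" where
  "face_max pos F = (THE v. v \<in> bdry_elems pos F \<and> (\<forall>w\<in>bdry_elems pos F. hle w v))"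

text \<open>Left boundary: min F, max F, and the boundary elements having the face
  immediately to their right; symmetrically for the right boundary.\<close>
definition left_bd :: "('a::order ext \<Rightarrow> complex) \<Rightarrow> complex set \<Rightarrow> 'a ext set" where
  "left_bd pos F =
     {v \<in> bdry_elems pos F. \<exists>\<epsilon>>0. \<forall>t. 0 < t \<and> t < \<epsilon> \<longrightarrow> pos v + complex_of_real t \<in> F}
     \<union> {face_min pos F, face_max pos F}"

definition right_bd :: "('a::order ext \<Rightarrow> complex) \<Rightarrow> complex set \<Rightarrow> 'a ext set" where
  "right_bd pos F =
     {v \<in> bdry_elems pos F. \<exists>\<epsilon>>0. \<forall>t. 0 < t \<and> t < \<epsilon> \<longrightarrow> pos v - complex_of_real t \<in> F}
     \<union> {face_min pos F, face_max pos F}"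

definition face_has_edge where
  "face_has_edge edge eL eR F e \<longleftrightarrow> path_image (path_of edge eL eR e) \<subseteq> frontier F"

definition bounded_spe ::
  "'a::order set \<Rightarrow> ('a ext \<Rightarrow> complex) \<Rightarrow> ('a ext \<Rightarrow> 'a ext \<Rightarrow> real \<Rightarrow> complex)
     \<Rightarrow> (real \<Rightarrow> complex) \<Rightarrow> (real \<Rightarrow> complex) \<Rightarrow> bool" where
  "bounded_spe A pos edge eL eR \<longleftrightarrow>
     bounded_embedding pos edge eL eR \<and>
     (\<forall>F\<in>bounded_faces pos edge eL eR. left_bd pos F \<inter> Ahat A \<noteq> {} \<longrightarrow>
        face_min pos F \<in> Ahat A \<and> face_max pos F \<in> Ahat A)"

text \<open>Total (strict) orders L on set ps \<union> set qs extending both decreasing chains;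
  (a, b) \<in> L means a is below b.\<close>
definition chain_exts :: "'a ext list \<Rightarrow> 'a ext list \<Rightarrow> ('a ext \<times> 'a ext) set set" where
  "chain_exts ps qs =
     {L. L \<subseteq> (set ps \<union> set qs) \<times> (set ps \<union> set qs) \<and>
         strict_linear_order_on (set ps \<union> set qs) L \<and>
         (\<forall>i. Suc i < length ps \<longrightarrow> (ps ! Suc i, ps ! i) \<in> L) \<and>
         (\<forall>i. Suc i < length qs \<longrightarrow> (qs ! Suc i, qs ! i) \<in> L)}"

definition gen_rel :: "('a::order ext \<times> 'a ext) set \<Rightarrow> ('a ext \<times> 'a ext) set" where
  "gen_rel L = (hrel \<union> L)\<^sup>+"

end

theory Submission
  imports Defs
begin

text \<open>Only the chain structure of the two boundaries matters. A point of the order polytope of P-hat lies in the polytope of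
  the linear extension that sorts the boundary elements by their coordinates (ties broken
  compatibly with P-hat), which gives the covering. For two linear extensions L1, L2 of the
  same set, the common part of their polytopes is cut out of the first one by the valid
  inequality \<open>\<Sum> (x p - x q) \<le> 0\<close> over the pairs that L1 and L2 order oppositely, so it is
  a face.\<close>

lemma hle_trans: "hle (a::'a::order ext) b \<Longrightarrow> hle b c \<Longrightarrow> hle a c"
  by (cases a; cases b; cases c) auto

lemma hle_antisym: "hle (a::'a::order ext) b \<Longrightarrow> hle b a \<Longrightarrow> a = b"
  by (cases a; cases b) auto

lemma trans_hrel: "trans (hrel :: ('a::order ext \<times> 'a ext) set)"
  unfolding hrel_def hlt_def trans_def using hle_trans hle_antisym by blast

lemma irrefl_hrel: "irrefl (hrel :: ('a::order ext \<times> 'a ext) set)"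
  by (simp add: hrel_def hlt_def irrefl_def)

lemma order_poly_trancl_le:
  assumes "\<forall>(p, q)\<in>R. (x::real^'b) $ p \<le> x $ q" and "(a, b) \<in> R\<^sup>+"
  shows "x $ a \<le> x $ b"
  using assms(2) by (induction rule: trancl_induct) (use assms(1) in force)+

lemma order_poly_gen_rel:
  "order_poly (gen_rel L) B mu = {x \<in> order_poly hrel B mu. \<forall>(p, q)\<in>L. x $ p \<le> x $ q}"
proof -
  have "(\<forall>(p, q)\<in>(hrel \<union> L)\<^sup>+. x $ p \<le> x $ q) \<longleftrightarrow> (\<forall>(p, q)\<in>hrel \<union> L. x $ p \<le> x $ q)"
    for x :: "real^'a ext"
    using order_poly_trancl_le[of "hrel \<union> L" x] by blast
  then show ?thesis unfolding order_poly_def gen_rel_def by auto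
qed

lemma convex_order_poly:
  fixes R :: "('b::finite \<times> 'b) set"
  shows "convex (order_poly R B mu)"
proof (rule convexI)
  fix x y :: "real^'b" and u v :: real
  assume "x \<in> order_poly R B mu" "y \<in> order_poly R B mu" "0 \<le> u" "0 \<le> v" "u + v = 1"
  then show "u *\<^sub>R x + v *\<^sub>R y \<in> order_poly R B mu"
    unfolding order_poly_def
    by (auto 4 4 intro: add_mono mult_left_mono simp flip: distrib_right)
qed

text \<open>Ties in \<open>x\<close> are broken first by the rank in R, then by an arbitrary injection into
  the naturals.\<close>

lemma obtain_compatible_linear_order:
  fixes x :: "'b::finite \<Rightarrow> real" and R :: "('b \<times> 'b) set"
  assumes "trans R" "irrefl R" and x_mono: "\<forall>(p, q)\<in>R. x p \<le> x q"
  obtains L where "L \<subseteq> S \<times> S" "strict_linear_order_on S L" "R \<inter> S \<times> S \<subseteq> L"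
    "\<forall>(p, q)\<in>L. x p \<le> x q"
proof -
  obtain f :: "'b \<Rightarrow> nat" where "inj f"
    using finite_imp_inj_to_nat_seg[of "UNIV :: 'b set"] by auto
  define r where "r v = card {w. (w, v) \<in> R}" for v
  have r_mono: "r a < r b" if "(a, b) \<in> R" for a b
  proof -
    have "{w. (w, a) \<in> R} \<subset> {w. (w, b) \<in> R}"
      using that assms(1,2) unfolding trans_def irrefl_def by blast
    then show ?thesis unfolding r_def by (simp add: psubset_card_mono)
  qed
  define klt where "klt a b \<longleftrightarrow>
    x a < x b \<or> (x a = x b \<and> (r a < r b \<or> (r a = r b \<and> f a < f b)))" for a b
  define L where "L = {(a, b). a \<in> S \<and> b \<in> S \<and> klt a b}"
  have "strict_linear_order_on S L"
    unfolding strict_linear_order_on_def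
  proof (intro conjI)
    show "trans L" unfolding L_def klt_def trans_def by auto
    show "irrefl L" unfolding L_def klt_def irrefl_def by auto
    show "total_on S L"
    proof (rule total_onI)
      fix a b assume "a \<in> S" "b \<in> S" "a \<noteq> b"
      moreover have "f a \<noteq> f b" using \<open>inj f\<close> \<open>a \<noteq> b\<close> by (auto dest: injD)
      ultimately show "(a, b) \<in> L \<or> (b, a) \<in> L" unfolding L_def klt_def by auto
    qed
  qed
  moreover have "R \<inter> S \<times> S \<subseteq> L"
    using x_mono r_mono unfolding L_def klt_def by fastforce
  moreover have "\<forall>(p, q)\<in>L. x p \<le> x q" unfolding L_def klt_def by auto
  ultimately show thesis using that[of L] unfolding L_def by auto
qed

lemma sorted_desc_Suc_hrel:
  assumes "sorted_wrt (\<lambda>a b. hlt b a) xs" "Suc i < length xs"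
  shows "(xs ! Suc i, xs ! i) \<in> hrel"
  using assms by (simp add: sorted_wrt_iff_nth_less hrel_def)

lemma order_poly_eq_Union_chain_exts:
  assumes "sorted_wrt (\<lambda>a b. hlt b a) ps" "sorted_wrt (\<lambda>a b. hlt b a) qs"
  shows "(\<Union>L\<in>chain_exts ps qs. order_poly (gen_rel L) B mu) = order_poly hrel B mu"
proof (intro equalityI subsetI)
  fix x assume x: "x \<in> order_poly hrel B mu"
  let ?S = "set ps \<union> set qs"
  have "\<forall>(p, q)\<in>hrel. x $ p \<le> x $ q" using x by (simp add: order_poly_def)
  then obtain L where L: "L \<subseteq> ?S \<times> ?S" "strict_linear_order_on ?S L"
    "hrel \<inter> ?S \<times> ?S \<subseteq> L" "\<forall>(p, q)\<in>L. x $ p \<le> x $ q"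
    using obtain_compatible_linear_order[OF trans_hrel irrefl_hrel, of "($) x" ?S] by blast
  have "L \<in> chain_exts ps qs"
    unfolding chain_exts_def
    using L(1-3) sorted_desc_Suc_hrel[OF assms(1)] sorted_desc_Suc_hrel[OF assms(2)]
    by (auto dest: Suc_lessD)
  moreover have "x \<in> order_poly (gen_rel L) B mu"
    using x L(4) by (simp add: order_poly_gen_rel)
  ultimately show "x \<in> (\<Union>L\<in>chain_exts ps qs. order_poly (gen_rel L) B mu)" by blast
qed (auto simp: order_poly_gen_rel)

lemma order_poly_gen_rel_Int_face_of:
  assumes L1: "strict_linear_order_on S L1"
    and L2: "strict_linear_order_on S L2" "L2 \<subseteq> S \<times> S"
  shows "(order_poly (gen_rel L1) B mu \<inter> order_poly (gen_rel L2) B mu)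
           face_of order_poly (gen_rel L1) B mu"
proof -
  let ?O1 = "order_poly (gen_rel L1) B mu"
  let ?O2 = "order_poly (gen_rel L2) B mu"
  define D where "D = {(p, q) \<in> L1. (q, p) \<in> L2}"
  define c :: "real^'a ext" where "c = (\<Sum>(p, q)\<in>D. axis p 1 - axis q 1)"
  have c_inner: "c \<bullet> y = (\<Sum>(p, q)\<in>D. y $ p - y $ q)" for y :: "real^'a ext"
    unfolding c_def inner_sum_left
    by (rule sum.cong) (auto simp: inner_diff_left inner_commute[of "axis _ _"]
        cart_eq_inner_axis[symmetric])
  have D_le: "y $ p \<le> y $ q" if "y \<in> ?O1" "(p, q) \<in> D" for y p q
    using that by (auto simp: order_poly_gen_rel D_def)
  have valid: "c \<bullet> y \<le> 0" if "y \<in> ?O1" for y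
    unfolding c_inner using D_le[OF that] by (intro sum_nonpos) auto
  have "?O1 \<inter> ?O2 = ?O1 \<inter> {y. c \<bullet> y = 0}"
  proof (intro set_eqI iffI)
    fix y assume y: "y \<in> ?O1 \<inter> ?O2"
    then have "y $ p = y $ q" if "(p, q) \<in> D" for p q
      using D_le[of y p q] that by (fastforce simp: order_poly_gen_rel D_def)
    then show "y \<in> ?O1 \<inter> {y. c \<bullet> y = 0}" using y by (auto simp: c_inner intro: sum.neutral)
  next
    fix y assume y: "y \<in> ?O1 \<inter> {y. c \<bullet> y = 0}"
    have "(\<Sum>(p, q)\<in>D. y $ q - y $ p) = 0"
      using y by (simp add: c_inner split_def sum_subtractf)
    then have D_eq: "y $ p = y $ q" if "(p, q) \<in> D" for p q
      using sum_nonneg_eq_0_iff[of D "\<lambda>(p, q). y $ q - y $ p"] D_le[of y] y that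
      by (fastforce simp: finite_subset[of D UNIV])
    have "y $ a \<le> y $ b" if "(a, b) \<in> L2" for a b
    proof -
      have "a \<noteq> b" using that L2(1) by (auto simp: strict_linear_order_on_def irrefl_def)
      then have "(a, b) \<in> L1 \<or> (b, a) \<in> L1"
        using that L1 L2(2) by (auto simp: strict_linear_order_on_def total_on_def)
      then show ?thesis
        using y that D_eq[of b a] by (auto simp: order_poly_gen_rel D_def)
    qed
    then show "y \<in> ?O1 \<inter> ?O2" using y by (auto simp: order_poly_gen_rel)
  qed
  then show ?thesis
    using face_of_Int_supporting_hyperplane_le[OF convex_order_poly valid] by simp
qed

theorem lemma5p2:
  fixes A :: "'a::{finite,order} set" and lam :: "'a \<Rightarrow> real"
    and pos :: "'a ext \<Rightarrow> complex" and edge :: "'a ext \<Rightarrow> 'a ext \<Rightarrow> real \<Rightarrow> complex"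
    and eL eR :: "real \<Rightarrow> complex" and F :: "complex set"
    and ps qs :: "'a ext list"
  assumes "marked_poset A lam"
    and "bounded_spe A pos edge eL eR"
    and "F \<in> bounded_faces pos edge eL eR"
    and "\<not> face_has_edge edge eL eR F LeftE" and "\<not> face_has_edge edge eL eR F RightE"
    and "ps \<noteq> []" and "qs \<noteq> []"
    and "set ps = left_bd pos F" and "sorted_wrt (\<lambda>a b. hlt b a) ps"
    and "set qs = right_bd pos F" and "sorted_wrt (\<lambda>a b. hlt b a) qs"
    and "hd qs = hd ps" and "last qs = last ps"
  shows "(\<Union>L\<in>chain_exts ps qs. order_poly (gen_rel L) (Ahat A) (lamhat A lam))
           = order_poly hrel (Ahat A) (lamhat A lam)
       \<and> (\<forall>L1\<in>chain_exts ps qs. \<forall>L2\<in>chain_exts ps qs. L1 \<noteq> L2 \<longrightarrow>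
           (order_poly (gen_rel L1) (Ahat A) (lamhat A lam) \<inter>
            order_poly (gen_rel L2) (Ahat A) (lamhat A lam))
              face_of order_poly (gen_rel L1) (Ahat A) (lamhat A lam)
         \<and> (order_poly (gen_rel L1) (Ahat A) (lamhat A lam) \<inter>
            order_poly (gen_rel L2) (Ahat A) (lamhat A lam))
              face_of order_poly (gen_rel L2) (Ahat A) (lamhat A lam))"
proof (intro conjI ballI impI)
  show "(\<Union>L\<in>chain_exts ps qs. order_poly (gen_rel L) (Ahat A) (lamhat A lam))
          = order_poly hrel (Ahat A) (lamhat A lam)"
    using order_poly_eq_Union_chain_exts[OF assms(9,11)] .
  fix L1 L2 assume "L1 \<in> chain_exts ps qs" "L2 \<in> chain_exts ps qs"
  then have L: "strict_linear_order_on (set ps \<union> set qs) L"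
    "L \<subseteq> (set ps \<union> set qs) \<times> (set ps \<union> set qs)" if "L \<in> {L1, L2}" for L
    using that unfolding chain_exts_def by auto
  show "(order_poly (gen_rel L1) (Ahat A) (lamhat A lam) \<inter>
         order_poly (gen_rel L2) (Ahat A) (lamhat A lam))
          face_of order_poly (gen_rel L1) (Ahat A) (lamhat A lam)"
    using order_poly_gen_rel_Int_face_of L by blast
  show "(order_poly (gen_rel L1) (Ahat A) (lamhat A lam) \<inter>
         order_poly (gen_rel L2) (Ahat A) (lamhat A lam))
          face_of order_poly (gen_rel L2) (Ahat A) (lamhat A lam)"
    using order_poly_gen_rel_Int_face_of[of _ L2 L1] L by (metis Int_commute insertI1 insertI2)
qed

end
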